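(* Let $\lambda$ be a positive integer, $k\neq 0$, $\psi_0\in\mathbb{R}$, $F(\psi)=\frac{k}{\sin^2(\lambda\psi+\psi_0)}$, $G(\psi)=\cos(\lambda\psi+\psi_0)$, and $I_\lambda=\left(p_r+\frac{1}{\lambda r}\mathcal{X}_L\right)^\lambda G(\psi)$. Then the three functions $H=\frac12p_r^2+\frac{1}{r^2}L$, $L=\frac12p_\psi^2+F(\psi)$ and $I_\lambda$ are functionally independent on $(r,\psi,p_r,p_\psi)$-phase space (their differentials are linearly independent outside a closed nowhere dense set). Consequently, on the phase space with coordinates $(r,\psi,z,p_r,p_\psi,p_z)$, the five functions $$H_0=\frac12\left(p_r^2+\frac{1}{r^2}p_\psi^2+p_z^2\right)+\frac{F(\psi)}{r^2},\quad H_1=\frac12p_z^2,\quad H_2=\frac12p_\psi^2+F(\psi),$$ $$H_3=\frac12\left[(rp_z-zp_r)^2+\left(1+\frac{z^2}{r^2}\right)p_\psi^2\right]+\left(1+\frac{z^2}{r^2}\right)F(\psi),$$ and $I_\lambda$ are functionally independent, so the Hamiltonian $H_0$ is maximally superintegrable.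
   Context: $(r,\psi,z)$ are cylindrical coordinates in Euclidean 3-space with $r>0$, and $(p_r,p_\psi,p_z)$ the conjugate momenta with canonical Poisson bracket; dots denote derivatives in $\psi$. $\mathcal{X}_L=p_\psi\frac{\partial}{\partial\psi}-\dot F\frac{\partial}{\partial p_\psi}$ is the Hamiltonian vector field of $L$, viewed as a differential operator; $p_r$ and $1/(\lambda r)$ act by multiplication, and the power means applying the operator $\lambda$ times to $G$. Each of $H_0,\dots,H_3,I_\lambda$ Poisson-commutes with $H_0$. *)

theory Defs
  imports "HOL-Analysis.Analysis"
begin

definition Fpot :: "nat \<Rightarrow> real \<Rightarrow> real \<Rightarrow> real \<Rightarrow> real" where
  "Fpot lam k psi0 \<psi> = k / (sin (real lam * \<psi> + psi0))\<^sup>2"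

definition Gfun :: "nat \<Rightarrow> real \<Rightarrow> real \<Rightarrow> real" where
  "Gfun lam psi0 \<psi> = cos (real lam * \<psi> + psi0)"

text \<open>Functions on the reduced phase space, in curried form f r psi p_r p_psi.
  The Hamiltonian vector field of L = p_psi^2/2 + F(psi) as a differential operator:
  X_L = p_psi d/dpsi - F'(psi) d/dp_psi.\<close>
definition XL :: "(real \<Rightarrow> real) \<Rightarrow> (real \<Rightarrow> real \<Rightarrow> real \<Rightarrow> real \<Rightarrow> real)
                  \<Rightarrow> (real \<Rightarrow> real \<Rightarrow> real \<Rightarrow> real \<Rightarrow> real)" where
  "XL F f = (\<lambda>r \<psi> pr pp. pp * deriv (\<lambda>t. f r t pr pp) \<psi> - deriv F \<psi> * deriv (\<lambda>t. f r \<psi> pr t) pp)"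

definition Iop :: "nat \<Rightarrow> (real \<Rightarrow> real) \<Rightarrow> (real \<Rightarrow> real \<Rightarrow> real \<Rightarrow> real \<Rightarrow> real)
                  \<Rightarrow> (real \<Rightarrow> real \<Rightarrow> real \<Rightarrow> real \<Rightarrow> real)" where
  "Iop lam F f = (\<lambda>r \<psi> pr pp. pr * f r \<psi> pr pp + 1 / (real lam * r) * XL F f r \<psi> pr pp)"

definition Ilam :: "nat \<Rightarrow> real \<Rightarrow> real \<Rightarrow> real \<Rightarrow> real \<Rightarrow> real \<Rightarrow> real \<Rightarrow> real" where
  "Ilam lam k psi0 = (Iop lam (Fpot lam k psi0) ^^ lam) (\<lambda>r \<psi> pr pp. Gfun lam psi0 \<psi>)"

definition indep_differentials_at :: "('a::real_normed_vector \<Rightarrow> real) list \<Rightarrow> 'a \<Rightarrow> bool" where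
  "indep_differentials_at fs x \<longleftrightarrow>
     (\<forall>f\<in>set fs. f differentiable (at x)) \<and>
     (\<forall>c::nat \<Rightarrow> real.
        (\<forall>v. (\<Sum>i<length fs. c i * frechet_derivative (fs ! i) (at x) v) = 0)
        \<longrightarrow> (\<forall>i<length fs. c i = 0))"

definition functionally_independent :: "('a::real_normed_vector \<Rightarrow> real) list \<Rightarrow> 'a set \<Rightarrow> bool" where
  "functionally_independent fs D \<longleftrightarrow>
     (\<exists>S. S \<subseteq> D \<and> closedin (top_of_set D) S \<and> interior S = {} \<and>
          (\<forall>x\<in>D - S. indep_differentials_at fs x))"

end

theory Submission
  imports Defs "HOL-Computational_Algebra.Polynomial"
begin

text \<open>
  Plan of the proof.
  (1) X_L acts only on (psi, p_psi).  The functions of (psi, p_psi) built polynomially from p_psi,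
      cos, sin and 1/sin of lambda psi + psi0 form a class closed under partial derivatives on the
      regular region sin (lambda psi + psi0) \<noteq> 0; hence every X_L^j G lies in this class.
  (2) Since X_L commutes with multiplication by functions of (r, p_r), the binomial theorem gives
      I_lambda = sum_j C(lambda,j) p_r^(lambda-j) (lambda r)^(-j) X_L^j G, a polynomial in p_r.
  (3) On the reduced space, the differentials of H, L, I are independent wherever
      p_psi p_r Phi \<noteq> 0, where Phi is the 2x2 minor of dH, dI in the directions r, p_r.  As a
      polynomial in p_r, Phi has top coefficient proportional to X_L G = -lambda p_psi sin(...),
      so its non-vanishing set is dense; it is open because Phi is continuous.
  (4) On the full space, H_0 = H + H_1, and L, I are pulled back along the projection forgetting
      (z, p_z); only H_3 depends on z.  This reduces independence to step (3) at points where
      additionally p_z \<noteq> 0 and dH_3/dz \<noteq> 0, which is again a dense open condition.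
\<close>


lemma frechet_derivative_direction:
  fixes f :: "'a::real_normed_vector \<Rightarrow> real"
  assumes "f differentiable (at x)" and "((\<lambda>t. f (x + t *\<^sub>R v)) has_real_derivative d) (at 0)"
  shows "frechet_derivative f (at x) v = d"
proof -
  let ?D = "frechet_derivative f (at x)"
  have "((\<lambda>t. x + t *\<^sub>R v) has_derivative (\<lambda>t. t *\<^sub>R v)) (at 0)"
    by (auto intro!: derivative_eq_intros)
  then have "((\<lambda>t. f (x + t *\<^sub>R v)) has_derivative (\<lambda>t. ?D (t *\<^sub>R v))) (at 0)"
    by (rule has_derivative_compose) (simp add: assms(1) frechet_derivative_works[symmetric])
  moreover have "((\<lambda>t. f (x + t *\<^sub>R v)) has_derivative (\<lambda>t. t * d)) (at 0)"
    using assms(2) by (simp add: has_field_derivative_def mult_commute_abs)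
  ultimately have "(\<lambda>t. ?D (t *\<^sub>R v)) = (\<lambda>t. t * d)"
    by (rule has_derivative_unique)
  then show ?thesis by (metis mult_1 scaleR_one)
qed

lemma frechet_derivative_linear_compose:
  assumes "bounded_linear g" and "f differentiable (at (g x))"
  shows "(f \<circ> g) differentiable (at x)"
    and "frechet_derivative (f \<circ> g) (at x) v = frechet_derivative f (at (g x)) (g v)"
proof -
  have g: "g differentiable (at x)" "frechet_derivative g (at x) = g"
    using bounded_linear_imp_has_derivative[OF assms(1)]
    by (auto simp: differentiable_def frechet_derivative_at[symmetric])
  show "(f \<circ> g) differentiable (at x)"
    using differentiable_chain_at[OF g(1) assms(2)] .
  show "frechet_derivative (f \<circ> g) (at x) v = frechet_derivative f (at (g x)) (g v)"
    by (simp add: frechet_derivative_compose[OF g(1) assms(2)] g(2))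
qed

lemma frechet_derivative_add_at:
  assumes "f differentiable (at x)" and "g differentiable (at x)"
  shows "(\<lambda>y. f y + g y) differentiable (at x)"
    and "frechet_derivative (\<lambda>y. f y + g y) (at x) v
           = frechet_derivative f (at x) v + frechet_derivative g (at x) v"
proof -
  have "((\<lambda>y. f y + g y) has_derivative
          (\<lambda>v. frechet_derivative f (at x) v + frechet_derivative g (at x) v)) (at x)"
    using assms by (intro has_derivative_add) (simp_all add: frechet_derivative_works)
  then show "(\<lambda>y. f y + g y) differentiable (at x)"
    and "frechet_derivative (\<lambda>y. f y + g y) (at x) v
           = frechet_derivative f (at x) v + frechet_derivative g (at x) v"
    by (auto simp: differentiable_def frechet_derivative_at[symmetric])
qed

lemma differentiable_fst': "f differentiable F \<Longrightarrow> (\<lambda>x. fst (f x)) differentiable F"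
  unfolding differentiable_def using has_derivative_fst by blast

lemma differentiable_snd': "f differentiable F \<Longrightarrow> (\<lambda>x. snd (f x)) differentiable F"
  unfolding differentiable_def using has_derivative_snd by blast

lemma DERIV_shift_to_0:
  "(g has_real_derivative d) (at r) \<Longrightarrow> ((\<lambda>t. g (r + t)) has_real_derivative d) (at 0)"
  using DERIV_shift[of g d 0 r] by (simp add: add.commute)

lemma DERIV_inverse_scaled_power:
  fixes a r :: real
  assumes "a \<noteq> 0" and "r \<noteq> 0"
  shows "((\<lambda>s. (1 / (a * s))^j) has_real_derivative (- real j * (1 / (a * r))^j / r)) (at r)"
proof -
  let ?y = "1 / (a * r)"
  have "((\<lambda>s. 1 / (a * s)) has_real_derivative - (?y / r)) (at r)"
    using assms by (auto intro!: derivative_eq_intros simp: field_simps power2_eq_square)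
  from DERIV_chain2[OF DERIV_pow this]
  have "((\<lambda>s. (1 / (a * s))^j) has_real_derivative real j * ?y ^ (j - 1) * (- (?y / r))) (at r)"
    by simp
  moreover have "real j * ?y ^ (j - 1) * (- (?y / r)) = - real j * ?y^j / r"
    by (cases j) (simp_all add: divide_simps)
  ultimately show ?thesis by simp
qed

text \<open>Functional independence follows from pointwise independence of the differentials on the
  non-vanishing set of a continuous function Q, provided that set is dense in D: the exceptional
  set is then the zero set of Q, which is relatively closed with empty interior.\<close>
lemma functionally_independent_intro:
  fixes Q :: "'a::real_normed_vector \<Rightarrow> real"
  assumes cont: "continuous_on D Q"
    and dense: "\<And>y e. y \<in> D \<Longrightarrow> e > 0 \<Longrightarrow> \<exists>x\<in>ball y e. Q x \<noteq> 0"
    and indep: "\<And>x. x \<in> D \<Longrightarrow> Q x \<noteq> 0 \<Longrightarrow> indep_differentials_at fs x"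
  shows "functionally_independent fs D"
proof -
  let ?S = "{x \<in> D. Q x = 0}"
  have "closedin (top_of_set D) ?S"
    by (rule continuous_closedin_preimage_constant[OF cont])
  moreover have "interior ?S = {}"
  proof (rule ccontr)
    assume "interior ?S \<noteq> {}"
    then obtain y e where "e > 0" "ball y e \<subseteq> ?S"
      by (auto simp: mem_interior)
    moreover from this have "y \<in> D"
      using centre_in_ball by blast
    ultimately show False
      using dense by blast
  qed
  ultimately show ?thesis
    unfolding functionally_independent_def using indep by (intro exI[of _ ?S]) auto
qed

lemma poly_nonroot_near:
  fixes P :: "real poly"
  assumes "P \<noteq> 0" and "e > 0"
  shows "\<exists>t. \<bar>t - a\<bar> < e \<and> t \<noteq> 0 \<and> poly P t \<noteq> 0"
proof -
  have "infinite ({a - e<..<a + e} - ({t. poly P t = 0} \<union> {0}))"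
    using assms poly_roots_finite[OF assms(1)] by (intro Diff_infinite_finite infinite_Ioo) auto
  then obtain t where "t \<in> {a - e<..<a + e} - ({t. poly P t = 0} \<union> {0})"
    using infinite_imp_nonempty by blast
  then show ?thesis by (intro exI[of _ t]) (auto simp: abs_less_iff)
qed

lemma dist_change_last2:
  "dist (r::real, \<psi>::real, a::real, b::real) (r, \<psi>, a', b') \<le> \<bar>a - a'\<bar> + \<bar>b - b'\<bar>"
  by (simp add: dist_Pair_Pair dist_real_def sqrt_sum_squares_le_sum_abs)

lemma dist_change_last3:
  "dist (r::real, \<psi>::real, z::real, a::real, b::real, c::real) (r, \<psi>, z, a', b', c')
     \<le> \<bar>a - a'\<bar> + \<bar>b - b'\<bar> + \<bar>c - c'\<bar>"
proof -
  have "sqrt ((a - a')\<^sup>2 + (sqrt ((b - b')\<^sup>2 + (c - c')\<^sup>2))\<^sup>2)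
      \<le> \<bar>a - a'\<bar> + \<bar>sqrt ((b - b')\<^sup>2 + (c - c')\<^sup>2)\<bar>"
    by (rule sqrt_sum_squares_le_sum_abs)
  also have "\<dots> \<le> \<bar>a - a'\<bar> + \<bar>b - b'\<bar> + \<bar>c - c'\<bar>"
    using sqrt_sum_squares_le_sum_abs[of "b - b'" "c - c'"] by simp
  finally show ?thesis by (simp add: dist_Pair_Pair dist_real_def)
qed

lemma kernel_2x2:
  fixes a b c d x y :: real
  assumes det: "a * d - b * c \<noteq> 0" and "x * a + y * c = 0" and "x * b + y * d = 0"
  shows "x = 0 \<and> y = 0"
proof -
  have "x * (a * d - b * c) = d * (x * a + y * c) - c * (x * b + y * d)"
    and "y * (a * d - b * c) = a * (x * b + y * d) - b * (x * a + y * c)"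
    by (simp_all add: algebra_simps)
  then have "x * (a * d - b * c) = 0" and "y * (a * d - b * c) = 0"
    by (simp_all only: assms(2,3) mult_zero_right diff_zero)
  with det show ?thesis by simp
qed

lemma indep_differentials_three:
  fixes f g h :: "'a::real_normed_vector \<Rightarrow> real"
  assumes diff: "f differentiable (at x)" "g differentiable (at x)" "h differentiable (at x)"
    and g_u: "frechet_derivative g (at x) u = 0" and g_v: "frechet_derivative g (at x) v = 0"
    and g_w: "frechet_derivative g (at x) w \<noteq> 0"
    and det: "frechet_derivative f (at x) u * frechet_derivative h (at x) v
              - frechet_derivative f (at x) v * frechet_derivative h (at x) u \<noteq> 0"
  shows "indep_differentials_at [f, g, h] x"
  unfolding indep_differentials_at_def
proof (intro conjI allI impI)
  show "\<forall>f\<in>set [f, g, h]. f differentiable at x"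
    using diff by simp
  fix c :: "nat \<Rightarrow> real"
  assume A: "\<forall>v. (\<Sum>i<length [f, g, h]. c i * frechet_derivative ([f, g, h] ! i) (at x) v) = 0"
  have comb: "c 0 * frechet_derivative f (at x) y + c 1 * frechet_derivative g (at x) y
      + c 2 * frechet_derivative h (at x) y = 0" for y
    using A[rule_format, of y] by (simp add: eval_nat_numeral)
  have "c 0 = 0 \<and> c 2 = 0"
    by (rule kernel_2x2[OF det]) (use comb[of u] comb[of v] g_u g_v in simp_all)
  moreover from this have "c 1 = 0"
    using comb[of w] g_w by simp
  ultimately have "c 0 = 0" "c 1 = 0" "c 2 = 0"
    by simp_all
  fix i
  assume "i < length [f, g, h]"
  with \<open>c 0 = 0\<close> \<open>c 1 = 0\<close> \<open>c 2 = 0\<close> show "c i = 0"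
    by (auto simp: less_Suc_eq eval_nat_numeral)
qed


subsection \<open>Trigonometric polynomials in (psi, p_psi)\<close>

abbreviation regular :: "nat \<Rightarrow> real \<Rightarrow> real \<Rightarrow> bool" where
  "regular lam psi0 \<psi> \<equiv> sin (real lam * \<psi> + psi0) \<noteq> 0"

lemma open_regular: "open {t. regular lam psi0 t}"
  by (rule open_Collect_neq) (auto intro!: continuous_intros)

inductive_set trig_poly :: "nat \<Rightarrow> real \<Rightarrow> (real \<times> real \<Rightarrow> real) set"
  for lam :: nat and psi0 :: real where
  const: "(\<lambda>_. c) \<in> trig_poly lam psi0"
| momentum: "snd \<in> trig_poly lam psi0"
| cos: "(\<lambda>x. cos (real lam * fst x + psi0)) \<in> trig_poly lam psi0"
| sin: "(\<lambda>x. sin (real lam * fst x + psi0)) \<in> trig_poly lam psi0"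
| inv_sin: "(\<lambda>x. inverse (sin (real lam * fst x + psi0))) \<in> trig_poly lam psi0"
| add: "f \<in> trig_poly lam psi0 \<Longrightarrow> g \<in> trig_poly lam psi0 \<Longrightarrow> (\<lambda>x. f x + g x) \<in> trig_poly lam psi0"
| mult: "f \<in> trig_poly lam psi0 \<Longrightarrow> g \<in> trig_poly lam psi0 \<Longrightarrow> (\<lambda>x. f x * g x) \<in> trig_poly lam psi0"

lemma trig_poly_has_derivative:
  assumes "f \<in> trig_poly lam psi0"
  shows "\<exists>f1\<in>trig_poly lam psi0. \<exists>f2\<in>trig_poly lam psi0. \<forall>x. regular lam psi0 (fst x) \<longrightarrow>
           (f has_derivative (\<lambda>h. f1 x * fst h + f2 x * snd h)) (at x)"
  using assms
proof induction
  case (const c)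
  show ?case
    by (rule bexI[of _ "\<lambda>_. 0"], rule bexI[of _ "\<lambda>_. 0"]) (auto intro: trig_poly.const)
next
  case momentum
  show ?case
    by (rule bexI[of _ "\<lambda>_. 0"], rule bexI[of _ "\<lambda>_. 1"])
       (auto intro: trig_poly.const intro!: derivative_eq_intros)
next
  case cos
  have "(\<lambda>x. (\<lambda>_. - real lam) x * (\<lambda>x. sin (real lam * fst x + psi0)) x) \<in> trig_poly lam psi0"
    by (intro trig_poly.mult trig_poly.const trig_poly.sin)
  then show ?case
    by (rule bexI[rotated], intro bexI[of _ "\<lambda>_. 0"] allI impI)
       (auto intro: trig_poly.const intro!: derivative_eq_intros simp: fun_eq_iff)
next
  case sin
  have "(\<lambda>x. (\<lambda>_. real lam) x * (\<lambda>x. cos (real lam * fst x + psi0)) x) \<in> trig_poly lam psi0"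
    by (intro trig_poly.mult trig_poly.const trig_poly.cos)
  then show ?case
    by (rule bexI[rotated], intro bexI[of _ "\<lambda>_. 0"] allI impI)
       (auto intro: trig_poly.const intro!: derivative_eq_intros simp: fun_eq_iff)
next
  case inv_sin
  let ?i = "\<lambda>x. inverse (sin (real lam * fst x + psi0))"
  have "(\<lambda>x. (\<lambda>x. (\<lambda>_. - real lam) x * (\<lambda>x. cos (real lam * fst x + psi0)) x) x * (\<lambda>x. ?i x * ?i x) x)
          \<in> trig_poly lam psi0"
    by (intro trig_poly.mult trig_poly.const trig_poly.cos trig_poly.inv_sin)
  then show ?case
    by (rule bexI[rotated], intro bexI[of _ "\<lambda>_. 0"] allI impI)
       (auto intro: trig_poly.const intro!: derivative_eq_intros
             simp: fun_eq_iff power2_eq_square field_simps)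
next
  case (add f g)
  then obtain f1 f2 g1 g2 where
    "f1 \<in> trig_poly lam psi0" "f2 \<in> trig_poly lam psi0" "g1 \<in> trig_poly lam psi0" "g2 \<in> trig_poly lam psi0"
    "\<And>x. regular lam psi0 (fst x) \<Longrightarrow> (f has_derivative (\<lambda>h. f1 x * fst h + f2 x * snd h)) (at x)"
    "\<And>x. regular lam psi0 (fst x) \<Longrightarrow> (g has_derivative (\<lambda>h. g1 x * fst h + g2 x * snd h)) (at x)"
    by blast
  then show ?case
    by (intro bexI[of _ "\<lambda>x. f1 x + g1 x"] bexI[of _ "\<lambda>x. f2 x + g2 x"] allI impI)
       (auto intro!: trig_poly.add derivative_eq_intros simp: algebra_simps)
next
  case (mult f g)
  then obtain f1 f2 g1 g2 where
    "f1 \<in> trig_poly lam psi0" "f2 \<in> trig_poly lam psi0" "g1 \<in> trig_poly lam psi0" "g2 \<in> trig_poly lam psi0"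
    "\<And>x. regular lam psi0 (fst x) \<Longrightarrow> (f has_derivative (\<lambda>h. f1 x * fst h + f2 x * snd h)) (at x)"
    "\<And>x. regular lam psi0 (fst x) \<Longrightarrow> (g has_derivative (\<lambda>h. g1 x * fst h + g2 x * snd h)) (at x)"
    by blast
  with mult.hyps show ?case
    by (intro bexI[of _ "\<lambda>x. f1 x * g x + f x * g1 x"] bexI[of _ "\<lambda>x. f2 x * g x + f x * g2 x"] allI impI)
       (auto intro!: trig_poly.add trig_poly.mult derivative_eq_intros simp: algebra_simps)
qed

lemma represented_partials:
  assumes g: "g \<in> trig_poly lam psi0"
    and rep: "\<And>r \<psi> pr pp. regular lam psi0 \<psi> \<Longrightarrow> f r \<psi> pr pp = g (\<psi>, pp)"
  obtains g1 g2 where "g1 \<in> trig_poly lam psi0" "g2 \<in> trig_poly lam psi0"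
    "\<And>r \<psi> pr pp. regular lam psi0 \<psi> \<Longrightarrow> ((\<lambda>t. f r t pr pp) has_real_derivative g1 (\<psi>, pp)) (at \<psi>)"
    "\<And>r \<psi> pr pp. regular lam psi0 \<psi> \<Longrightarrow> ((\<lambda>t. f r \<psi> pr t) has_real_derivative g2 (\<psi>, pp)) (at pp)"
proof -
  obtain g1 g2 where T: "g1 \<in> trig_poly lam psi0" "g2 \<in> trig_poly lam psi0"
    and D: "\<And>x. regular lam psi0 (fst x) \<Longrightarrow> (g has_derivative (\<lambda>h. g1 x * fst h + g2 x * snd h)) (at x)"
    using trig_poly_has_derivative[OF g] by blast
  show thesis
  proof (rule that[OF T])
    fix r \<psi> pr pp
    assume reg: "regular lam psi0 \<psi>"
    have Dx: "(g has_derivative (\<lambda>h. g1 (\<psi>, pp) * fst h + g2 (\<psi>, pp) * snd h)) (at (\<psi>, pp))"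
      using D reg by simp
    have "((\<lambda>t. g (t, pp)) has_derivative (\<lambda>h. g1 (\<psi>, pp) * fst (h, 0::real) + g2 (\<psi>, pp) * snd (h, 0::real))) (at \<psi>)"
      by (rule has_derivative_compose[where f="\<lambda>t. (t, pp)", OF _ Dx]) (auto intro!: derivative_eq_intros)
    then have "((\<lambda>t. g (t, pp)) has_real_derivative g1 (\<psi>, pp)) (at \<psi>)"
      by (simp add: has_field_derivative_def mult_commute_abs)
    then show "((\<lambda>t. f r t pr pp) has_real_derivative g1 (\<psi>, pp)) (at \<psi>)"
      by (rule has_field_derivative_transform_within_open[OF _ open_regular[of lam psi0]]) (simp_all add: reg rep)
    have "((\<lambda>t. g (\<psi>, t)) has_derivative (\<lambda>h. g1 (\<psi>, pp) * fst (0::real, h) + g2 (\<psi>, pp) * snd (0::real, h))) (at pp)"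
      by (rule has_derivative_compose[where f="\<lambda>t. (\<psi>, t)", OF _ Dx]) (auto intro!: derivative_eq_intros)
    then show "((\<lambda>t. f r \<psi> pr t) has_real_derivative g2 (\<psi>, pp)) (at pp)"
      using rep[OF reg] by (simp add: has_field_derivative_def mult_commute_abs)
  qed
qed

lemma trig_poly_differentiable_comp:
  assumes "g \<in> trig_poly lam psi0" "f differentiable (at x)" "h differentiable (at x)"
    and "regular lam psi0 (f x)"
  shows "(\<lambda>x. g (f x, h x)) differentiable (at x)"
proof -
  obtain g1 g2 where "\<forall>y. regular lam psi0 (fst y) \<longrightarrow> (g has_derivative (\<lambda>h. g1 y * fst h + g2 y * snd h)) (at y)"
    using trig_poly_has_derivative[OF assms(1)] by blast
  then have "g differentiable (at (f x, h x))"
    using assms(4) unfolding differentiable_def by auto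
  moreover have "(\<lambda>x. (f x, h x)) differentiable (at x)"
    using assms(2,3) unfolding differentiable_def by (auto intro: has_derivative_Pair)
  ultimately show ?thesis
    using differentiable_compose[of g "\<lambda>x. (f x, h x)" x] by (simp add: o_def)
qed

lemma Fpot_trig_poly: "(\<lambda>x. Fpot lam k psi0 (fst x)) \<in> trig_poly lam psi0"
proof -
  have "(\<lambda>x. (\<lambda>_. k) x * (\<lambda>x. (\<lambda>x. inverse (sin (real lam * fst x + psi0))) x
          * (\<lambda>x. inverse (sin (real lam * fst x + psi0))) x) x) \<in> trig_poly lam psi0"
    by (intro trig_poly.mult trig_poly.const trig_poly.inv_sin)
  then show ?thesis
    by (simp add: Fpot_def power2_eq_square divide_inverse)
qed

lemma Fpot_differentiable_comp:
  assumes "f differentiable (at x)" and "regular lam psi0 (f x)"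
  shows "(\<lambda>x. Fpot lam k psi0 (f x)) differentiable (at x)"
  using trig_poly_differentiable_comp[OF Fpot_trig_poly assms(1) differentiable_const assms(2)]
  by simp

lemma deriv_Fpot_trig_poly:
  obtains F1 where "F1 \<in> trig_poly lam psi0"
    "\<And>\<psi> pp. regular lam psi0 \<psi> \<Longrightarrow> deriv (Fpot lam k psi0) \<psi> = F1 (\<psi>, pp)"
proof -
  have rep: "(\<lambda>r \<psi> pr pp. Fpot lam k psi0 \<psi>) r \<psi> pr pp = (\<lambda>x. Fpot lam k psi0 (fst x)) (\<psi>, pp)"
    for r \<psi> pr pp :: real
    by simp
  obtain F1 where "F1 \<in> trig_poly lam psi0"
    "\<And>\<psi> pp. regular lam psi0 \<psi> \<Longrightarrow> (Fpot lam k psi0 has_real_derivative F1 (\<psi>, pp)) (at \<psi>)"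
    using represented_partials[OF Fpot_trig_poly rep] by meson
  then show thesis using that DERIV_imp_deriv by blast
qed


subsection \<open>The powers X_L^j G\<close>

lemma XL_at:
  assumes "((\<lambda>t. f r t pr pp) has_real_derivative d1) (at \<psi>)"
      and "((\<lambda>t. f r \<psi> pr t) has_real_derivative d2) (at pp)"
  shows "XL F f r \<psi> pr pp = pp * d1 - deriv F \<psi> * d2"
  using assms by (simp add: XL_def DERIV_imp_deriv)

definition XL_power :: "nat \<Rightarrow> real \<Rightarrow> real \<Rightarrow> nat \<Rightarrow> real \<Rightarrow> real \<Rightarrow> real \<Rightarrow> real \<Rightarrow> real" where
  "XL_power lam k psi0 j = (XL (Fpot lam k psi0) ^^ j) (\<lambda>r \<psi> pr pp. Gfun lam psi0 \<psi>)"

lemma XL_power_Suc: "XL_power lam k psi0 (Suc j) = XL (Fpot lam k psi0) (XL_power lam k psi0 j)"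
  by (simp add: XL_power_def)

lemma XL_power_trig_poly:
  "\<exists>g\<in>trig_poly lam psi0. \<forall>r \<psi> pr pp. regular lam psi0 \<psi> \<longrightarrow> XL_power lam k psi0 j r \<psi> pr pp = g (\<psi>, pp)"
proof (induction j)
  case 0
  show ?case
    by (rule bexI[OF _ trig_poly.cos]) (simp add: XL_power_def Gfun_def)
next
  case (Suc j)
  then obtain g where g: "g \<in> trig_poly lam psi0"
    and rep: "\<And>r \<psi> pr pp. regular lam psi0 \<psi> \<Longrightarrow> XL_power lam k psi0 j r \<psi> pr pp = g (\<psi>, pp)"
    by blast
  obtain g1 g2 where T: "g1 \<in> trig_poly lam psi0" "g2 \<in> trig_poly lam psi0"
    and D: "\<And>r \<psi> pr pp. regular lam psi0 \<psi> \<Longrightarrow> ((\<lambda>t. XL_power lam k psi0 j r t pr pp) has_real_derivative g1 (\<psi>, pp)) (at \<psi>)"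
           "\<And>r \<psi> pr pp. regular lam psi0 \<psi> \<Longrightarrow> ((\<lambda>t. XL_power lam k psi0 j r \<psi> pr t) has_real_derivative g2 (\<psi>, pp)) (at pp)"
    by (rule represented_partials[where f="XL_power lam k psi0 j", OF g rep]) blast+
  obtain F1 where F1: "F1 \<in> trig_poly lam psi0"
    "\<And>\<psi> pp. regular lam psi0 \<psi> \<Longrightarrow> deriv (Fpot lam k psi0) \<psi> = F1 (\<psi>, pp)"
    using deriv_Fpot_trig_poly by blast
  have "(\<lambda>x. (\<lambda>x. snd x * g1 x) x + (\<lambda>x. ((\<lambda>_. -1) x * F1 x) * g2 x) x) \<in> trig_poly lam psi0"
    by (intro trig_poly.add trig_poly.mult trig_poly.momentum trig_poly.const T F1)
  moreover have "XL_power lam k psi0 (Suc j) r \<psi> pr pp = pp * g1 (\<psi>, pp) - F1 (\<psi>, pp) * g2 (\<psi>, pp)"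
    if "regular lam psi0 \<psi>" for r \<psi> pr pp
    using XL_at[where f="XL_power lam k psi0 j", OF D(1)[OF that] D(2)[OF that]] F1(2)[OF that]
    by (simp add: XL_power_def)
  ultimately show ?case by (intro bexI[of _ "\<lambda>x. snd x * g1 x + - 1 * F1 x * g2 x"]) auto
qed

lemma XL_power_partials:
  assumes "regular lam psi0 \<psi>"
  shows "(\<lambda>t. XL_power lam k psi0 j r t pr pp) field_differentiable at \<psi>"
    and "(\<lambda>t. XL_power lam k psi0 j r \<psi> pr t) field_differentiable at pp"
proof -
  obtain g where g: "g \<in> trig_poly lam psi0"
    and rep: "\<And>r \<psi> pr pp. regular lam psi0 \<psi> \<Longrightarrow> XL_power lam k psi0 j r \<psi> pr pp = g (\<psi>, pp)"
    using XL_power_trig_poly by blast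
  obtain g1 g2 where
    "\<And>r \<psi> pr pp. regular lam psi0 \<psi> \<Longrightarrow> ((\<lambda>t. XL_power lam k psi0 j r t pr pp) has_real_derivative g1 (\<psi>, pp)) (at \<psi>)"
    "\<And>r \<psi> pr pp. regular lam psi0 \<psi> \<Longrightarrow> ((\<lambda>t. XL_power lam k psi0 j r \<psi> pr t) has_real_derivative g2 (\<psi>, pp)) (at pp)"
    by (rule represented_partials[where f="XL_power lam k psi0 j", OF g rep]) blast+
  with assms show "(\<lambda>t. XL_power lam k psi0 j r t pr pp) field_differentiable at \<psi>"
    and "(\<lambda>t. XL_power lam k psi0 j r \<psi> pr t) field_differentiable at pp"
    unfolding field_differentiable_def by blast+
qed

text \<open>X_L G = - lambda p_psi sin(lambda psi + psi0); it gives the top coefficient of Phi below.\<close>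
lemma XL_power_one: "XL_power lam k psi0 1 r \<psi> pr pp = - real lam * pp * sin (real lam * \<psi> + psi0)"
proof -
  have "((\<lambda>t. Gfun lam psi0 t) has_real_derivative (- sin (real lam * \<psi> + psi0) * real lam)) (at \<psi>)"
    unfolding Gfun_def by (auto intro!: derivative_eq_intros)
  from XL_at[where f="\<lambda>r \<psi> pr pp. Gfun lam psi0 \<psi>", OF this DERIV_const]
  show ?thesis by (simp add: XL_power_def)
qed


subsection \<open>Binomial expansion of I_lambda\<close>

text \<open>X_L is linear and commutes with multiplication by functions of (r, p_r): applied to a
  combination of the X_L^j G it shifts every index by one.\<close>
lemma XL_combination:
  assumes reg: "regular lam psi0 \<psi>"
    and f: "\<And>t pp. regular lam psi0 t \<Longrightarrow> f r t pr pp = (\<Sum>j\<in>A. c j * XL_power lam k psi0 j r t pr pp)"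
  shows "XL (Fpot lam k psi0) f r \<psi> pr pp = (\<Sum>j\<in>A. c j * XL_power lam k psi0 (Suc j) r \<psi> pr pp)"
proof -
  define D1 where "D1 j = deriv (\<lambda>t. XL_power lam k psi0 j r t pr pp) \<psi>" for j
  define D2 where "D2 j = deriv (\<lambda>t. XL_power lam k psi0 j r \<psi> pr t) pp" for j
  have D1: "((\<lambda>t. XL_power lam k psi0 j r t pr pp) has_real_derivative D1 j) (at \<psi>)"
    and D2: "((\<lambda>t. XL_power lam k psi0 j r \<psi> pr t) has_real_derivative D2 j) (at pp)" for j
    unfolding D1_def D2_def DERIV_deriv_iff_field_differentiable
    using XL_power_partials[OF reg] by simp_all
  have "((\<lambda>t. \<Sum>j\<in>A. c j * XL_power lam k psi0 j r t pr pp) has_real_derivative (\<Sum>j\<in>A. c j * D1 j)) (at \<psi>)"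
    by (intro DERIV_sum DERIV_cmult D1)
  then have "((\<lambda>t. f r t pr pp) has_real_derivative (\<Sum>j\<in>A. c j * D1 j)) (at \<psi>)"
    by (rule has_field_derivative_transform_within_open[OF _ open_regular[of lam psi0]])
       (use reg f in simp_all)
  moreover have "((\<lambda>t. f r \<psi> pr t) has_real_derivative (\<Sum>j\<in>A. c j * D2 j)) (at pp)"
  proof -
    have "(\<lambda>t. f r \<psi> pr t) = (\<lambda>t. \<Sum>j\<in>A. c j * XL_power lam k psi0 j r \<psi> pr t)"
      using f[OF reg] by simp
    then show ?thesis by (simp only:) (intro DERIV_sum DERIV_cmult D2)
  qed
  ultimately have "XL (Fpot lam k psi0) f r \<psi> pr pp
      = pp * (\<Sum>j\<in>A. c j * D1 j) - deriv (Fpot lam k psi0) \<psi> * (\<Sum>j\<in>A. c j * D2 j)"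
    by (rule XL_at[where f=f])
  also have "\<dots> = (\<Sum>j\<in>A. c j * XL_power lam k psi0 (Suc j) r \<psi> pr pp)"
  proof -
    have step: "XL_power lam k psi0 (Suc j) r \<psi> pr pp = pp * D1 j - deriv (Fpot lam k psi0) \<psi> * D2 j" for j
      using XL_at[where f="XL_power lam k psi0 j", OF D1 D2] by (simp add: XL_power_Suc)
    show ?thesis
      unfolding step by (simp add: sum_distrib_left sum_subtractf[symmetric] algebra_simps)
  qed
  finally show ?thesis .
qed

lemma binomial_recurrence:
  fixes pr a :: real and h :: "nat \<Rightarrow> real"
  shows "pr * (\<Sum>j\<le>n. real (n choose j) * pr^(n-j) * a^j * h j)
       + a * (\<Sum>j\<le>n. real (n choose j) * pr^(n-j) * a^j * h (Suc j))
       = (\<Sum>j\<le>Suc n. real (Suc n choose j) * pr^(Suc n-j) * a^j * h j)"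
proof -
  have "pr * (\<Sum>j\<le>n. real (n choose j) * pr^(n-j) * a^j * h j)
      = (\<Sum>j\<le>Suc n. real (n choose j) * pr^(Suc n-j) * a^j * h j)"
    by (simp add: sum_distrib_left Suc_diff_le algebra_simps)
  also have "\<dots> = pr^(Suc n) * h 0 + (\<Sum>j\<le>n. real (n choose Suc j) * pr^(n-j) * a^(Suc j) * h (Suc j))"
    by (subst sum.atMost_Suc_shift) simp
  finally have left: "pr * (\<Sum>j\<le>n. real (n choose j) * pr^(n-j) * a^j * h j) = \<dots>" .
  have right: "a * (\<Sum>j\<le>n. real (n choose j) * pr^(n-j) * a^j * h (Suc j))
     = (\<Sum>j\<le>n. real (n choose j) * pr^(n-j) * a^(Suc j) * h (Suc j))"
    by (simp add: sum_distrib_left algebra_simps)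
  have "(\<Sum>j\<le>Suc n. real (Suc n choose j) * pr^(Suc n-j) * a^j * h j)
     = pr^(Suc n) * h 0 + (\<Sum>j\<le>n. (real (n choose j) + real (n choose Suc j)) * pr^(n-j) * a^(Suc j) * h (Suc j))"
    by (subst sum.atMost_Suc_shift) simp
  then show ?thesis
    unfolding left right by (simp add: sum.distrib algebra_simps)
qed

lemma Iop_power_expansion:
  assumes "regular lam psi0 \<psi>"
  shows "(Iop lam (Fpot lam k psi0) ^^ n) (\<lambda>r \<psi> pr pp. Gfun lam psi0 \<psi>) r \<psi> pr pp
       = (\<Sum>j\<le>n. real (n choose j) * pr^(n-j) * (1 / (real lam * r))^j * XL_power lam k psi0 j r \<psi> pr pp)"
  using assms
proof (induction n arbitrary: \<psi> pp)
  case 0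
  then show ?case by (simp add: XL_power_def)
next
  case (Suc n)
  let ?f = "(Iop lam (Fpot lam k psi0) ^^ n) (\<lambda>r \<psi> pr pp. Gfun lam psi0 \<psi>)"
  let ?a = "1 / (real lam * r)"
  have XL_f: "XL (Fpot lam k psi0) ?f r \<psi> pr pp
      = (\<Sum>j\<le>n. real (n choose j) * pr^(n-j) * ?a^j * XL_power lam k psi0 (Suc j) r \<psi> pr pp)"
    by (rule XL_combination[where c="\<lambda>j. real (n choose j) * pr^(n-j) * ?a^j"]) (use Suc in auto)
  have "(Iop lam (Fpot lam k psi0) ^^ Suc n) (\<lambda>r \<psi> pr pp. Gfun lam psi0 \<psi>) r \<psi> pr pp
      = pr * ?f r \<psi> pr pp + ?a * XL (Fpot lam k psi0) ?f r \<psi> pr pp"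
    by (simp add: Iop_def)
  also have "\<dots> = (\<Sum>j\<le>Suc n. real (Suc n choose j) * pr^(Suc n-j) * ?a^j * XL_power lam k psi0 j r \<psi> pr pp)"
    unfolding XL_f Suc.IH[OF Suc.prems] by (rule binomial_recurrence)
  finally show ?case .
qed


subsection \<open>I_lambda as a polynomial in p_r\<close>

text \<open>Fix, for every j, a trigonometric polynomial gs j representing X_L^j G on the regular
  region; the rest of the argument works with these explicit representatives.\<close>
locale XL_expansion =
  fixes lam :: nat and k psi0 :: real and gs :: "nat \<Rightarrow> real \<times> real \<Rightarrow> real"
  assumes lam_pos: "lam > 0"
    and gs_trig_poly: "\<And>j. gs j \<in> trig_poly lam psi0"
    and XL_power_gs: "\<And>j r \<psi> pr pp. regular lam psi0 \<psi> \<Longrightarrow> XL_power lam k psi0 j r \<psi> pr pp = gs j (\<psi>, pp)"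
begin

text \<open>The explicit formula for I_lambda, its partial derivatives in r and p_r, the angular
  momentum L, and the 2x2 minor Phi of (dH, dI) in the directions (r, p_r).\<close>
definition Iexp :: "real \<Rightarrow> real \<Rightarrow> real \<Rightarrow> real \<Rightarrow> real" where
  "Iexp r \<psi> pr pp = (\<Sum>j\<le>lam. real (lam choose j) * pr^(lam-j) * (1 / (real lam * r))^j * gs j (\<psi>, pp))"

definition Ir :: "real \<Rightarrow> real \<Rightarrow> real \<Rightarrow> real \<Rightarrow> real" where
  "Ir r \<psi> pr pp = (\<Sum>j\<le>lam. real (lam choose j) * pr^(lam-j) * (- real j * (1 / (real lam * r))^j / r) * gs j (\<psi>, pp))"

definition Ipr :: "real \<Rightarrow> real \<Rightarrow> real \<Rightarrow> real \<Rightarrow> real" where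
  "Ipr r \<psi> pr pp = (\<Sum>j\<le>lam. real (lam choose j) * (real (lam - j) * pr^(lam - j - 1)) * (1 / (real lam * r))^j * gs j (\<psi>, pp))"

definition Lf :: "real \<Rightarrow> real \<Rightarrow> real" where
  "Lf \<psi> pp = pp\<^sup>2 / 2 + Fpot lam k psi0 \<psi>"

definition Phi :: "real \<Rightarrow> real \<Rightarrow> real \<Rightarrow> real \<Rightarrow> real" where
  "Phi r \<psi> pr pp = - 2 * Lf \<psi> pp / r^3 * Ipr r \<psi> pr pp - pr * Ir r \<psi> pr pp"

definition Phi_poly :: "real \<Rightarrow> real \<Rightarrow> real \<Rightarrow> real poly" where
  "Phi_poly r \<psi> pp = (\<Sum>j\<le>lam.
      monom (- 2 * Lf \<psi> pp / r^3 * real (lam choose j) * real (lam - j) * (1 / (real lam * r))^j * gs j (\<psi>, pp)) (lam - j - 1)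
    + monom (real (lam choose j) * real j * (1 / (real lam * r))^j * gs j (\<psi>, pp) / r) (Suc (lam - j)))"

lemma Ilam_eq_Iexp:
  assumes "regular lam psi0 \<psi>"
  shows "Ilam lam k psi0 r \<psi> pr pp = Iexp r \<psi> pr pp"
  unfolding Ilam_def Iexp_def Iop_power_expansion[OF assms] using XL_power_gs[OF assms] by simp

lemma Ilam_deriv_r:
  assumes "regular lam psi0 \<psi>" and "r \<noteq> 0"
  shows "((\<lambda>s. Ilam lam k psi0 s \<psi> pr pp) has_real_derivative Ir r \<psi> pr pp) (at r)"
proof -
  have "(\<lambda>s. Ilam lam k psi0 s \<psi> pr pp) = (\<lambda>s. Iexp s \<psi> pr pp)"
    using Ilam_eq_Iexp[OF assms(1)] by auto
  then show ?thesis
    unfolding Iexp_def Ir_def using lam_pos assms(2)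
    by (simp only:) (intro DERIV_sum DERIV_cmult_right DERIV_cmult DERIV_inverse_scaled_power; simp)
qed

lemma Ilam_deriv_pr:
  assumes "regular lam psi0 \<psi>"
  shows "((\<lambda>t. Ilam lam k psi0 r \<psi> t pp) has_real_derivative Ipr r \<psi> pr pp) (at pr)"
proof -
  have "(\<lambda>t. Ilam lam k psi0 r \<psi> t pp) = (\<lambda>t. Iexp r \<psi> t pp)"
    using Ilam_eq_Iexp[OF assms(1)] by auto
  then show ?thesis
    unfolding Iexp_def Ipr_def by (simp only:) (intro DERIV_sum DERIV_cmult_right DERIV_cmult DERIV_pow[THEN DERIV_cong]; simp)
qed

lemma poly_Phi_poly: "poly (Phi_poly r \<psi> pp) pr = Phi r \<psi> pr pp"
proof -
  have "Phi r \<psi> pr pp = (\<Sum>j\<le>lam. - 2 * Lf \<psi> pp / r^3 * (real (lam choose j) * (real (lam - j) * pr^(lam - j - 1)) * (1 / (real lam * r))^j * gs j (\<psi>, pp))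
      - pr * (real (lam choose j) * pr^(lam-j) * (- real j * (1 / (real lam * r))^j / r) * gs j (\<psi>, pp)))"
    by (simp only: Phi_def Ipr_def Ir_def sum_distrib_left sum_subtractf)
  also have "\<dots> = poly (Phi_poly r \<psi> pp) pr"
    unfolding Phi_poly_def poly_sum poly_add poly_monom
    by (rule sum.cong) (simp_all add: divide_inverse power_Suc algebra_simps)
  finally show ?thesis by simp
qed

lemma Phi_poly_top_coeff: "coeff (Phi_poly r \<psi> pp) lam = real lam * (1 / (real lam * r)) * gs 1 (\<psi>, pp) / r"
proof -
  have "coeff (Phi_poly r \<psi> pp) lam
      = (\<Sum>j\<le>lam. if j = 1 then real (lam choose j) * real j * (1 / (real lam * r))^j * gs j (\<psi>, pp) / r else 0)"
    unfolding Phi_poly_def coeff_sum coeff_add coeff_monom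
    by (rule sum.cong) (use lam_pos in auto)
  also have "\<dots> = real lam * (1 / (real lam * r)) * gs 1 (\<psi>, pp) / r"
    using lam_pos by (simp add: sum.delta)
  finally show ?thesis .
qed

text \<open>Its coefficient of p_r^lambda is X_L G / r^2 = - lambda p_psi sin(...) / r^2, so Phi is a
  nonzero polynomial in p_r whenever p_psi \<noteq> 0.\<close>
lemma Phi_poly_nonzero:
  assumes "r \<noteq> 0" and "regular lam psi0 \<psi>" and "pp \<noteq> 0"
  shows "Phi_poly r \<psi> pp \<noteq> 0"
proof
  assume "Phi_poly r \<psi> pp = 0"
  then have "coeff (Phi_poly r \<psi> pp) lam = 0" by simp
  moreover have "gs 1 (\<psi>, pp) = - real lam * pp * sin (real lam * \<psi> + psi0)"
    using XL_power_gs[OF assms(2), of 1] XL_power_one by metis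
  ultimately show False using assms lam_pos by (simp add: Phi_poly_top_coeff)
qed


subsection \<open>Independence on the reduced phase space\<close>

lemma open_regular_phase: "open {x :: real \<times> real \<times> real \<times> real. regular lam psi0 (fst (snd x))}"
  by (rule open_Collect_neq) (auto intro!: continuous_intros)

text \<open>I_lambda is differentiable on the regular region (away from r = 0): it agrees there with
  the explicit formula on an open set.\<close>
lemma Ilam_differentiable:
  assumes "r \<noteq> 0" and "regular lam psi0 \<psi>"
  shows "(\<lambda>(r, \<psi>, pr, pp). Ilam lam k psi0 r \<psi> pr pp) differentiable (at (r, \<psi>, pr, pp))"
proof -
  let ?J = "\<lambda>x::real\<times>real\<times>real\<times>real. Iexp (fst x) (fst (snd x)) (fst (snd (snd x))) (snd (snd (snd x)))"
  have "?J differentiable (at (r, \<psi>, pr, pp))"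
    unfolding Iexp_def using assms lam_pos
    by (auto intro!: differentiable_sum differentiable_mult differentiable_power differentiable_divide
        differentiable_const differentiable_ident differentiable_fst' differentiable_snd' trig_poly_differentiable_comp[OF gs_trig_poly])
  then obtain D where "(?J has_derivative D) (at (r, \<psi>, pr, pp))"
    unfolding differentiable_def by blast
  then have "((\<lambda>(r, \<psi>, pr, pp). Ilam lam k psi0 r \<psi> pr pp) has_derivative D) (at (r, \<psi>, pr, pp))"
    by (rule has_derivative_transform_within_open[OF _ open_regular_phase])
       (use assms in \<open>auto simp: Ilam_eq_Iexp\<close>)
  then show ?thesis unfolding differentiable_def by blast
qed

text \<open>The differentials of H, L, I are independent wherever this function does not vanish.\<close>
definition nondeg :: "real \<times> real \<times> real \<times> real \<Rightarrow> real" where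
  "nondeg = (\<lambda>(r, \<psi>, pr, pp). pp * pr * Phi r \<psi> pr pp)"

lemma nondeg_differentiable:
  assumes "fst x \<noteq> 0" and "regular lam psi0 (fst (snd x))"
  shows "nondeg differentiable (at x)"
  unfolding nondeg_def Phi_def Ipr_def Ir_def Lf_def split_def using assms lam_pos
  by (auto intro!: differentiable_sum differentiable_mult differentiable_power differentiable_divide
      differentiable_diff differentiable_add differentiable_minus differentiable_const differentiable_ident
      differentiable_fst' differentiable_snd' trig_poly_differentiable_comp[OF gs_trig_poly]
      Fpot_differentiable_comp)

text \<open>Non-degenerate points are dense: perturb p_psi away from 0, then p_r away from the roots
  of the polynomial Phi.\<close>
lemma nondeg_nonzero_near:
  assumes "r \<noteq> 0" and "regular lam psi0 \<psi>" and "e > 0"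
  shows "\<exists>pr' pp'. \<bar>pr' - pr\<bar> < e \<and> \<bar>pp' - pp\<bar> < e \<and> nondeg (r, \<psi>, pr', pp') \<noteq> 0"
proof -
  define pp' where "pp' = (if pp \<noteq> 0 then pp else e / 2)"
  have pp': "pp' \<noteq> 0" "\<bar>pp' - pp\<bar> < e"
    using assms(3) by (auto simp: pp'_def)
  obtain pr' where "\<bar>pr' - pr\<bar> < e" "pr' \<noteq> 0" "poly (Phi_poly r \<psi> pp') pr' \<noteq> 0"
    using poly_nonroot_near[OF Phi_poly_nonzero[OF assms(1,2) pp'(1)] assms(3)] by blast
  with pp' show ?thesis
    by (intro exI[of _ pr'] exI[of _ pp']) (simp add: nondeg_def poly_Phi_poly)
qed

text \<open>At a non-degenerate point: dL vanishes in the directions r and p_r but not p_psi, and the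
  (r, p_r)-block of (dH, dI) has determinant Phi.\<close>
lemma reduced_indep_at:
  assumes r: "r \<noteq> 0" and reg: "regular lam psi0 \<psi>" and nd: "nondeg (r, \<psi>, pr, pp) \<noteq> 0"
  shows "indep_differentials_at
      [(\<lambda>(r, \<psi>, pr, pp). 1/2 * pr\<^sup>2 + 1 / r\<^sup>2 * (1/2 * pp\<^sup>2 + Fpot lam k psi0 \<psi>)),
       (\<lambda>(r, \<psi>, pr, pp). 1/2 * pp\<^sup>2 + Fpot lam k psi0 \<psi>),
       (\<lambda>(r, \<psi>, pr, pp). Ilam lam k psi0 r \<psi> pr pp)] (r, \<psi>, pr, pp)"
proof -
  let ?H = "(\<lambda>(r, \<psi>, pr, pp). 1/2 * pr\<^sup>2 + 1 / r\<^sup>2 * (1/2 * pp\<^sup>2 + Fpot lam k psi0 \<psi>)) :: real\<times>real\<times>real\<times>real \<Rightarrow> real"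
  let ?L = "(\<lambda>(r, \<psi>, pr, pp). 1/2 * pp\<^sup>2 + Fpot lam k psi0 \<psi>) :: real\<times>real\<times>real\<times>real \<Rightarrow> real"
  let ?I = "(\<lambda>(r, \<psi>, pr, pp). Ilam lam k psi0 r \<psi> pr pp) :: real\<times>real\<times>real\<times>real \<Rightarrow> real"
  let ?x = "(r, \<psi>, pr, pp)"
  have pp: "pp \<noteq> 0" and det: "Phi r \<psi> pr pp \<noteq> 0"
    using nd by (auto simp: nondeg_def)
  have dH: "?H differentiable (at ?x)" and dL: "?L differentiable (at ?x)"
    unfolding split_def using r reg
    by (auto intro!: differentiable_add differentiable_mult differentiable_power differentiable_divide
        differentiable_const differentiable_ident differentiable_fst' differentiable_snd' Fpot_differentiable_comp)
  have dI: "?I differentiable (at ?x)"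
    by (rule Ilam_differentiable[OF r reg])
  have H_r: "frechet_derivative ?H (at ?x) (1,0,0,0) = - 2 * Lf \<psi> pp / r^3"
    by (rule frechet_derivative_direction[OF dH])
       (simp; use r in \<open>auto intro!: derivative_eq_intros simp: Lf_def field_simps power2_eq_square power3_eq_cube\<close>)
  have H_pr: "frechet_derivative ?H (at ?x) (0,0,1,0) = pr"
    by (rule frechet_derivative_direction[OF dH]) (simp; auto intro!: derivative_eq_intros simp: power2_eq_square)
  have L_r: "frechet_derivative ?L (at ?x) (1,0,0,0) = 0"
    and L_pr: "frechet_derivative ?L (at ?x) (0,0,1,0) = 0"
    by (rule frechet_derivative_direction[OF dL]; simp; auto intro!: derivative_eq_intros)+
  have L_pp: "frechet_derivative ?L (at ?x) (0,0,0,1) = pp"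
    by (rule frechet_derivative_direction[OF dL]) (simp; auto intro!: derivative_eq_intros simp: power2_eq_square)
  have I_r: "frechet_derivative ?I (at ?x) (1,0,0,0) = Ir r \<psi> pr pp"
    using DERIV_shift_to_0[OF Ilam_deriv_r[OF reg r]]
    by (intro frechet_derivative_direction[OF dI]) simp
  have I_pr: "frechet_derivative ?I (at ?x) (0,0,1,0) = Ipr r \<psi> pr pp"
    using DERIV_shift_to_0[OF Ilam_deriv_pr[OF reg]]
    by (intro frechet_derivative_direction[OF dI]) simp
  show ?thesis
    by (rule indep_differentials_three[OF dH dL dI L_r L_pr, of "(0,0,0,1)"],
        unfold L_pp H_r H_pr I_r I_pr) (use pp det in \<open>simp_all add: Phi_def\<close>)
qed

lemma reduced_functionally_independent:
  "functionally_independent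
      [(\<lambda>(r, \<psi>, pr, pp). 1/2 * pr\<^sup>2 + 1 / r\<^sup>2 * (1/2 * pp\<^sup>2 + Fpot lam k psi0 \<psi>)),
       (\<lambda>(r, \<psi>, pr, pp). 1/2 * pp\<^sup>2 + Fpot lam k psi0 \<psi>),
       (\<lambda>(r, \<psi>, pr, pp). Ilam lam k psi0 r \<psi> pr pp)]
      {x :: real \<times> real \<times> real \<times> real. fst x > 0 \<and> regular lam psi0 (fst (snd x))}"
proof (rule functionally_independent_intro)
  show "continuous_on {x. fst x > 0 \<and> regular lam psi0 (fst (snd x))} nondeg"
    by (intro continuous_at_imp_continuous_on ballI differentiable_imp_continuous_within
        nondeg_differentiable) auto
next
  fix y :: "real \<times> real \<times> real \<times> real" and e :: real
  assume "y \<in> {x. fst x > 0 \<and> regular lam psi0 (fst (snd x))}" and e: "e > 0"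
  moreover obtain r \<psi> pr pp where y: "y = (r, \<psi>, pr, pp)"
    by (metis prod.collapse)
  ultimately obtain pr' pp' where close: "\<bar>pr' - pr\<bar> < e / 2" "\<bar>pp' - pp\<bar> < e / 2"
    and nz: "nondeg (r, \<psi>, pr', pp') \<noteq> 0"
    using nondeg_nonzero_near[of r \<psi> "e / 2" pr pp] by auto
  have "dist y (r, \<psi>, pr', pp') < e"
    using dist_change_last2[of r \<psi> pr pp pr' pp'] close unfolding y by linarith
  with nz show "\<exists>x\<in>ball y e. nondeg x \<noteq> 0"
    by (intro bexI[of _ "(r, \<psi>, pr', pp')"]) auto
next
  fix x :: "real \<times> real \<times> real \<times> real"
  assume x: "x \<in> {x. fst x > 0 \<and> regular lam psi0 (fst (snd x))}" "nondeg x \<noteq> 0"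
  obtain r \<psi> pr pp where x_eq: "x = (r, \<psi>, pr, pp)"
    by (metis prod.collapse)
  show "indep_differentials_at
      [(\<lambda>(r, \<psi>, pr, pp). 1/2 * pr\<^sup>2 + 1 / r\<^sup>2 * (1/2 * pp\<^sup>2 + Fpot lam k psi0 \<psi>)),
       (\<lambda>(r, \<psi>, pr, pp). 1/2 * pp\<^sup>2 + Fpot lam k psi0 \<psi>),
       (\<lambda>(r, \<psi>, pr, pp). Ilam lam k psi0 r \<psi> pr pp)] x"
    unfolding x_eq by (rule reduced_indep_at) (use x x_eq in auto)
qed

end


subsection \<open>Independence on the full phase space\<close>

definition reduce :: "real \<times> real \<times> real \<times> real \<times> real \<times> real \<Rightarrow> real \<times> real \<times> real \<times> real" where
  "reduce x = (fst x, fst (snd x), fst (snd (snd (snd x))), fst (snd (snd (snd (snd x)))))"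

lemma reduce_Pair [simp]: "reduce (r, \<psi>, z, pr, pp, pz) = (r, \<psi>, pr, pp)"
  by (simp add: reduce_def)

lemma bounded_linear_reduce: "bounded_linear reduce"
proof -
  have "(reduce has_derivative reduce) (at 0)"
    unfolding reduce_def by (rule has_derivative_eq_rhs) (auto intro!: derivative_eq_intros)
  then show ?thesis by (rule has_derivative_bounded_linear)
qed

lemma reduce_pullback:
  assumes "f differentiable (at (reduce x))"
  shows "(\<lambda>y. f (reduce y)) differentiable (at x)"
    and "frechet_derivative (\<lambda>y. f (reduce y)) (at x) v = frechet_derivative f (at (reduce x)) (reduce v)"
  using frechet_derivative_linear_compose[OF bounded_linear_reduce assms] by (simp_all add: o_def)

lemma indep_differentials_lift:
  fixes h l i :: "real \<times> real \<times> real \<times> real \<Rightarrow> real"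
    and q m :: "real \<times> real \<times> real \<times> real \<times> real \<times> real \<Rightarrow> real"
  assumes indep: "indep_differentials_at [h, l, i] (reduce x)"
    and q: "q differentiable (at x)" and m: "m differentiable (at x)"
    and q_flat: "\<And>a b c d. frechet_derivative q (at x) (a, b, 0, c, d, 0) = 0"
    and q_z: "frechet_derivative q (at x) (0, 0, 1, 0, 0, 0) = 0"
    and q_pz: "frechet_derivative q (at x) (0, 0, 0, 0, 0, 1) \<noteq> 0"
    and m_z: "frechet_derivative m (at x) (0, 0, 1, 0, 0, 0) \<noteq> 0"
  shows "indep_differentials_at
    [\<lambda>y. h (reduce y) + q y, q, \<lambda>y. l (reduce y), m, \<lambda>y. i (reduce y)] x"
proof -
  let ?fs = "[\<lambda>y. h (reduce y) + q y, q, \<lambda>y. l (reduce y), m, \<lambda>y. i (reduce y)]"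
  let ?D = "\<lambda>f. frechet_derivative f (at (reduce x))"
  let ?Dx = "\<lambda>f. frechet_derivative f (at x)"
  have diff4: "h differentiable (at (reduce x))" "l differentiable (at (reduce x))"
    "i differentiable (at (reduce x))"
    using indep by (auto simp: indep_differentials_at_def)
  have zero: "?D f (0, 0, 0, 0) = 0" if "f differentiable (at (reduce x))" for f :: "real \<times> real \<times> real \<times> real \<Rightarrow> real"
    using linear_0[OF linear_frechet_derivative[OF that]] by (simp add: zero_prod_def)
  have H0: "(\<lambda>y. h (reduce y) + q y) differentiable (at x)"
    "?Dx (\<lambda>y. h (reduce y) + q y) v = ?D h (reduce v) + ?Dx q v" for v
    using frechet_derivative_add_at[OF reduce_pullback(1)[OF diff4(1)] q] reduce_pullback(2)[OF diff4(1)]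
    by simp_all
  show ?thesis
    unfolding indep_differentials_at_def
  proof (intro conjI allI impI)
    show "\<forall>f\<in>set ?fs. f differentiable at x"
      using H0(1) q m reduce_pullback(1)[OF diff4(2)] reduce_pullback(1)[OF diff4(3)] by simp
    fix c :: "nat \<Rightarrow> real"
    assume A: "\<forall>v. (\<Sum>n<length ?fs. c n * ?Dx (?fs ! n) v) = 0"
    have comb: "c 0 * (?D h (reduce v) + ?Dx q v) + c 1 * ?Dx q v + c 2 * ?D l (reduce v)
        + c 3 * ?Dx m v + c 4 * ?D i (reduce v) = 0" for v
      using A[rule_format, of v] by (simp add: eval_nat_numeral H0(2) reduce_pullback(2) diff4)
    txt \<open>Only m depends on z, and only q (also inside the first function) depends on p_z.\<close>
    have c3: "c 3 = 0"
      using comb[of "(0, 0, 1, 0, 0, 0)"] q_z m_z by (simp add: zero diff4)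
    have "(c 0 + c 1) * ?Dx q (0, 0, 0, 0, 0, 1) = 0"
      using comb[of "(0, 0, 0, 0, 0, 1)"] c3 by (simp add: zero diff4 distrib_right)
    with q_pz have c1: "c 1 = - c 0"
      by simp
    txt \<open>Along the reduced directions the relation becomes one between dh, dl and di.\<close>
    have "\<forall>w. (\<Sum>n<length [h, l, i]. [c 0, c 2, c 4] ! n * ?D ([h, l, i] ! n) w) = 0"
    proof
      fix w :: "real \<times> real \<times> real \<times> real"
      obtain a b e d where w: "w = (a, b, e, d)" by (metis prod.collapse)
      show "(\<Sum>n<length [h, l, i]. [c 0, c 2, c 4] ! n * ?D ([h, l, i] ! n) w) = 0"
        using comb[of "(a, b, 0, e, d, 0)"] q_flat c1 c3 unfolding w
        by (simp add: eval_nat_numeral algebra_simps)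
    qed
    with indep have "[c 0, c 2, c 4] ! n = 0" if "n < 3" for n
      using that unfolding indep_differentials_at_def by auto
    from this[of 0] this[of 1] this[of 2] have "c 0 = 0" "c 2 = 0" "c 4 = 0"
      by simp_all
    fix n
    assume "n < length ?fs"
    with \<open>c 0 = 0\<close> \<open>c 2 = 0\<close> \<open>c 4 = 0\<close> c1 c3 show "c n = 0"
      by (auto simp: less_Suc_eq eval_nat_numeral)
  qed
qed

context XL_expansion begin

text \<open>The z-derivative of H_3.\<close>
definition Ez :: "real \<Rightarrow> real \<Rightarrow> real \<Rightarrow> real \<Rightarrow> real \<Rightarrow> real \<Rightarrow> real" where
  "Ez r \<psi> z pr pp pz = - (r * pz - z * pr) * pr + 2 * z * Lf \<psi> pp / r^2"

lemma H3_deriv_z: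
  assumes r: "r \<noteq> 0" and reg: "regular lam psi0 \<psi>"
  defines "H3 \<equiv> (\<lambda>(r, \<psi>, z, pr, pp, pz). 1/2 * ((r * pz - z * pr)\<^sup>2 + (1 + z\<^sup>2 / r\<^sup>2) * pp\<^sup>2)
                                     + (1 + z\<^sup>2 / r\<^sup>2) * Fpot lam k psi0 \<psi>) :: real\<times>real\<times>real\<times>real\<times>real\<times>real \<Rightarrow> real"
  shows "H3 differentiable (at (r, \<psi>, z, pr, pp, pz))"
    and "frechet_derivative H3 (at (r, \<psi>, z, pr, pp, pz)) (0, 0, 1, 0, 0, 0) = Ez r \<psi> z pr pp pz"
proof -
  show dH3: "H3 differentiable (at (r, \<psi>, z, pr, pp, pz))"
    unfolding H3_def split_def using r reg
    by (auto intro!: differentiable_add differentiable_mult differentiable_power differentiable_divide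
        differentiable_diff differentiable_const differentiable_ident differentiable_fst' differentiable_snd'
        Fpot_differentiable_comp)
  show "frechet_derivative H3 (at (r, \<psi>, z, pr, pp, pz)) (0, 0, 1, 0, 0, 0) = Ez r \<psi> z pr pp pz"
    by (rule frechet_derivative_direction[OF dH3])
       (simp add: H3_def; use r in \<open>auto intro!: derivative_eq_intros simp: Ez_def Lf_def field_simps power2_eq_square\<close>)
qed

text \<open>At a full non-degenerate point the lifting lemma applies with q = H_1 and m = H_3.\<close>
lemma full_indep_at:
  assumes r: "r \<noteq> 0" and reg: "regular lam psi0 \<psi>" and nd: "nondeg (r, \<psi>, pr, pp) \<noteq> 0"
    and pz: "pz \<noteq> 0" and E: "Ez r \<psi> z pr pp pz \<noteq> 0"
  shows "indep_differentials_at
      [(\<lambda>(r, \<psi>, z, pr, pp, pz). 1/2 * (pr\<^sup>2 + 1 / r\<^sup>2 * pp\<^sup>2 + pz\<^sup>2) + Fpot lam k psi0 \<psi> / r\<^sup>2),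
       (\<lambda>(r, \<psi>, z, pr, pp, pz). 1/2 * pz\<^sup>2),
       (\<lambda>(r, \<psi>, z, pr, pp, pz). 1/2 * pp\<^sup>2 + Fpot lam k psi0 \<psi>),
       (\<lambda>(r, \<psi>, z, pr, pp, pz). 1/2 * ((r * pz - z * pr)\<^sup>2 + (1 + z\<^sup>2 / r\<^sup>2) * pp\<^sup>2)
                                     + (1 + z\<^sup>2 / r\<^sup>2) * Fpot lam k psi0 \<psi>),
       (\<lambda>(r, \<psi>, z, pr, pp, pz). Ilam lam k psi0 r \<psi> pr pp)] (r, \<psi>, z, pr, pp, pz)"
proof -
  let ?H = "(\<lambda>(r, \<psi>, pr, pp). 1/2 * pr\<^sup>2 + 1 / r\<^sup>2 * (1/2 * pp\<^sup>2 + Fpot lam k psi0 \<psi>)) :: real\<times>real\<times>real\<times>real \<Rightarrow> real"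
  let ?L = "(\<lambda>(r, \<psi>, pr, pp). 1/2 * pp\<^sup>2 + Fpot lam k psi0 \<psi>) :: real\<times>real\<times>real\<times>real \<Rightarrow> real"
  let ?I = "(\<lambda>(r, \<psi>, pr, pp). Ilam lam k psi0 r \<psi> pr pp) :: real\<times>real\<times>real\<times>real \<Rightarrow> real"
  let ?H1 = "(\<lambda>(r, \<psi>, z, pr, pp, pz). 1/2 * pz\<^sup>2) :: real\<times>real\<times>real\<times>real\<times>real\<times>real \<Rightarrow> real"
  let ?H3 = "(\<lambda>(r, \<psi>, z, pr, pp, pz). 1/2 * ((r * pz - z * pr)\<^sup>2 + (1 + z\<^sup>2 / r\<^sup>2) * pp\<^sup>2)
                                     + (1 + z\<^sup>2 / r\<^sup>2) * Fpot lam k psi0 \<psi>) :: real\<times>real\<times>real\<times>real\<times>real\<times>real \<Rightarrow> real"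
  let ?x = "(r, \<psi>, z, pr, pp, pz)"
  have list_eq: "[(\<lambda>(r, \<psi>, z, pr, pp, pz). 1/2 * (pr\<^sup>2 + 1 / r\<^sup>2 * pp\<^sup>2 + pz\<^sup>2) + Fpot lam k psi0 \<psi> / r\<^sup>2),
       ?H1, (\<lambda>(r, \<psi>, z, pr, pp, pz). 1/2 * pp\<^sup>2 + Fpot lam k psi0 \<psi>), ?H3,
       (\<lambda>(r, \<psi>, z, pr, pp, pz). Ilam lam k psi0 r \<psi> pr pp)]
    = [\<lambda>y. ?H (reduce y) + ?H1 y, ?H1, \<lambda>y. ?L (reduce y), ?H3, \<lambda>y. ?I (reduce y)]"
    by (auto simp: fun_eq_iff algebra_simps)
  have dH1: "(?H1 has_derivative (\<lambda>v. pz * snd (snd (snd (snd (snd v)))))) (at ?x)"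
    unfolding split_def by (rule has_derivative_eq_rhs) (auto intro!: derivative_eq_intros)
  then have DH1: "frechet_derivative ?H1 (at ?x) = (\<lambda>v. pz * snd (snd (snd (snd (snd v)))))"
    by (rule frechet_derivative_at[symmetric])
  show ?thesis
    unfolding list_eq
  proof (rule indep_differentials_lift)
    show "indep_differentials_at [?H, ?L, ?I] (reduce ?x)"
      using reduced_indep_at[OF r reg nd] by simp
    show "?H1 differentiable (at ?x)"
      using dH1 by (auto simp: differentiable_def)
    show "frechet_derivative ?H1 (at ?x) (a, b, 0, c, d, 0) = 0" for a b c d
      unfolding DH1 by simp
    show "frechet_derivative ?H1 (at ?x) (0, 0, 1, 0, 0, 0) = 0"
      unfolding DH1 by simp
    show "frechet_derivative ?H1 (at ?x) (0, 0, 0, 0, 0, 1) \<noteq> 0"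
      unfolding DH1 using pz by simp
  qed (use H3_deriv_z[OF r reg] E in auto)
qed

definition nondeg_full :: "real \<times> real \<times> real \<times> real \<times> real \<times> real \<Rightarrow> real" where
  "nondeg_full y = (case y of (r, \<psi>, z, pr, pp, pz) \<Rightarrow> pz * Ez r \<psi> z pr pp pz) * nondeg (reduce y)"

lemma nondeg_full_differentiable:
  assumes "fst y \<noteq> 0" and "regular lam psi0 (fst (snd y))"
  shows "nondeg_full differentiable (at y)"
proof -
  have "(\<lambda>y. nondeg (reduce y)) differentiable (at y)"
    using frechet_derivative_linear_compose(1)[OF bounded_linear_reduce nondeg_differentiable] assms
    by (simp add: o_def reduce_def)
  then show ?thesis
    unfolding nondeg_full_def Ez_def Lf_def split_def using assms
    by (auto intro!: differentiable_mult differentiable_power differentiable_divide differentiable_diff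
        differentiable_add differentiable_minus differentiable_const differentiable_ident
        differentiable_fst' differentiable_snd' Fpot_differentiable_comp)
qed

text \<open>Full non-degenerate points are dense: after choosing reduced momenta as before, dH_3/dz
  is affine in p_z with nonzero slope - r p_r, so p_z can be moved off its root and off 0.\<close>
lemma nondeg_full_nonzero_near:
  assumes r: "r \<noteq> 0" and reg: "regular lam psi0 \<psi>" and e: "e > 0"
  shows "\<exists>pr' pp' pz'. \<bar>pr' - pr\<bar> < e \<and> \<bar>pp' - pp\<bar> < e \<and> \<bar>pz' - pz\<bar> < e
           \<and> nondeg_full (r, \<psi>, z, pr', pp', pz') \<noteq> 0"
proof -
  obtain pr' pp' where close: "\<bar>pr' - pr\<bar> < e" "\<bar>pp' - pp\<bar> < e"
    and nz: "nondeg (r, \<psi>, pr', pp') \<noteq> 0"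
    using nondeg_nonzero_near[OF r reg e] by blast
  then have "pr' \<noteq> 0" by (auto simp: nondeg_def)
  let ?P = "[: z * pr'^2 + 2 * z * Lf \<psi> pp' / r^2, - (r * pr') :]"
  have "?P \<noteq> 0" using r \<open>pr' \<noteq> 0\<close> by simp
  then obtain pz' where pz': "\<bar>pz' - pz\<bar> < e" "pz' \<noteq> 0" "poly ?P pz' \<noteq> 0"
    using poly_nonroot_near[OF _ e] by blast
  then have "Ez r \<psi> z pr' pp' pz' \<noteq> 0"
    by (simp add: Ez_def algebra_simps power2_eq_square)
  with nz pz' have "nondeg_full (r, \<psi>, z, pr', pp', pz') \<noteq> 0"
    by (simp add: nondeg_full_def)
  with close pz' show ?thesis by blast
qed

lemma full_functionally_independent:
  "functionally_independent
      [(\<lambda>(r, \<psi>, z, pr, pp, pz). 1/2 * (pr\<^sup>2 + 1 / r\<^sup>2 * pp\<^sup>2 + pz\<^sup>2) + Fpot lam k psi0 \<psi> / r\<^sup>2),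
       (\<lambda>(r, \<psi>, z, pr, pp, pz). 1/2 * pz\<^sup>2),
       (\<lambda>(r, \<psi>, z, pr, pp, pz). 1/2 * pp\<^sup>2 + Fpot lam k psi0 \<psi>),
       (\<lambda>(r, \<psi>, z, pr, pp, pz). 1/2 * ((r * pz - z * pr)\<^sup>2 + (1 + z\<^sup>2 / r\<^sup>2) * pp\<^sup>2)
                                     + (1 + z\<^sup>2 / r\<^sup>2) * Fpot lam k psi0 \<psi>),
       (\<lambda>(r, \<psi>, z, pr, pp, pz). Ilam lam k psi0 r \<psi> pr pp)]
      {x :: real \<times> real \<times> real \<times> real \<times> real \<times> real. fst x > 0 \<and> regular lam psi0 (fst (snd x))}"
proof (rule functionally_independent_intro)
  show "continuous_on {x. fst x > 0 \<and> regular lam psi0 (fst (snd x))} nondeg_full"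
    by (intro continuous_at_imp_continuous_on ballI differentiable_imp_continuous_within
        nondeg_full_differentiable) auto
next
  fix y :: "real \<times> real \<times> real \<times> real \<times> real \<times> real" and e :: real
  assume "y \<in> {x. fst x > 0 \<and> regular lam psi0 (fst (snd x))}" and e: "e > 0"
  moreover obtain r \<psi> z pr pp pz where y: "y = (r, \<psi>, z, pr, pp, pz)"
    by (metis prod.collapse)
  ultimately obtain pr' pp' pz' where close: "\<bar>pr' - pr\<bar> < e / 3" "\<bar>pp' - pp\<bar> < e / 3" "\<bar>pz' - pz\<bar> < e / 3"
    and nz: "nondeg_full (r, \<psi>, z, pr', pp', pz') \<noteq> 0"
    using nondeg_full_nonzero_near[of r \<psi> "e / 3" pr pp pz z] by auto
  have "dist y (r, \<psi>, z, pr', pp', pz') < e"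
    using dist_change_last3[of r \<psi> z pr pp pz pr' pp' pz'] close unfolding y by linarith
  with nz show "\<exists>x\<in>ball y e. nondeg_full x \<noteq> 0"
    by (intro bexI[of _ "(r, \<psi>, z, pr', pp', pz')"]) auto
next
  fix x :: "real \<times> real \<times> real \<times> real \<times> real \<times> real"
  assume x: "x \<in> {x. fst x > 0 \<and> regular lam psi0 (fst (snd x))}" "nondeg_full x \<noteq> 0"
  obtain r \<psi> z pr pp pz where x_eq: "x = (r, \<psi>, z, pr, pp, pz)"
    by (metis prod.collapse)
  show "indep_differentials_at
      [(\<lambda>(r, \<psi>, z, pr, pp, pz). 1/2 * (pr\<^sup>2 + 1 / r\<^sup>2 * pp\<^sup>2 + pz\<^sup>2) + Fpot lam k psi0 \<psi> / r\<^sup>2),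
       (\<lambda>(r, \<psi>, z, pr, pp, pz). 1/2 * pz\<^sup>2),
       (\<lambda>(r, \<psi>, z, pr, pp, pz). 1/2 * pp\<^sup>2 + Fpot lam k psi0 \<psi>),
       (\<lambda>(r, \<psi>, z, pr, pp, pz). 1/2 * ((r * pz - z * pr)\<^sup>2 + (1 + z\<^sup>2 / r\<^sup>2) * pp\<^sup>2)
                                     + (1 + z\<^sup>2 / r\<^sup>2) * Fpot lam k psi0 \<psi>),
       (\<lambda>(r, \<psi>, z, pr, pp, pz). Ilam lam k psi0 r \<psi> pr pp)] x"
    unfolding x_eq by (rule full_indep_at) (use x x_eq in \<open>auto simp: nondeg_full_def\<close>)
qed

end

theorem theorem2:
  fixes lam :: nat and k psi0 :: real
  assumes "lam > 0" and "k \<noteq> 0"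
  defines "F \<equiv> Fpot lam k psi0"
      and "I \<equiv> Ilam lam k psi0"
  shows
   "functionally_independent
      [(\<lambda>(r, \<psi>, pr, pp). 1/2 * pr\<^sup>2 + 1 / r\<^sup>2 * (1/2 * pp\<^sup>2 + F \<psi>)),
       (\<lambda>(r, \<psi>, pr, pp). 1/2 * pp\<^sup>2 + F \<psi>),
       (\<lambda>(r, \<psi>, pr, pp). I r \<psi> pr pp)]
      {x :: real \<times> real \<times> real \<times> real.
         fst x > 0 \<and> sin (real lam * fst (snd x) + psi0) \<noteq> 0}
    \<and>
    functionally_independent
      [(\<lambda>(r, \<psi>, z, pr, pp, pz). 1/2 * (pr\<^sup>2 + 1 / r\<^sup>2 * pp\<^sup>2 + pz\<^sup>2) + F \<psi> / r\<^sup>2),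
       (\<lambda>(r, \<psi>, z, pr, pp, pz). 1/2 * pz\<^sup>2),
       (\<lambda>(r, \<psi>, z, pr, pp, pz). 1/2 * pp\<^sup>2 + F \<psi>),
       (\<lambda>(r, \<psi>, z, pr, pp, pz). 1/2 * ((r * pz - z * pr)\<^sup>2 + (1 + z\<^sup>2 / r\<^sup>2) * pp\<^sup>2)
                                     + (1 + z\<^sup>2 / r\<^sup>2) * F \<psi>),
       (\<lambda>(r, \<psi>, z, pr, pp, pz). I r \<psi> pr pp)]
      {x :: real \<times> real \<times> real \<times> real \<times> real \<times> real.
         fst x > 0 \<and> sin (real lam * fst (snd x) + psi0) \<noteq> 0}"
proof -
  have "\<forall>j. \<exists>g. g \<in> trig_poly lam psi0 \<and>
      (\<forall>r \<psi> pr pp. regular lam psi0 \<psi> \<longrightarrow> XL_power lam k psi0 j r \<psi> pr pp = g (\<psi>, pp))"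
    using XL_power_trig_poly by blast
  then obtain gs where "\<And>j. gs j \<in> trig_poly lam psi0"
    "\<And>j r \<psi> pr pp. regular lam psi0 \<psi> \<Longrightarrow> XL_power lam k psi0 j r \<psi> pr pp = gs j (\<psi>, pp)"
    by metis
  then interpret XL_expansion lam k psi0 gs
    using assms(1) by unfold_locales auto
  show ?thesis
    unfolding F_def I_def
    using reduced_functionally_independent full_functionally_independent by blast
qed

end
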